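(* Suppose that $1/n\ll \eta\ll \zeta,1/r,1/k$. Suppose $F$ is an allocation such that for every $j\in[r]$ there exists $f\in F$ with $f^{-1}(j)\neq\emptyset$. Let $\mathcal{P}$ be a partition of a set $V$ into parts $V_1,\dots,V_r$, each of size $n$, and let $J$ be a $\mathcal{P}F$-partite $k$-complex on $V$ satisfying $\delta^F(J)\ge (n,\zeta n,\dots,\zeta n)$. Then for every $j\in[r]$ and every $v\in V_j$, $$|\tilde N_{\eta,1}(v,J_k)\cap V_j|\ge \delta^F_{k-1}(J)-\sqrt{\eta}\,n.$$
   Context: Hierarchy convention: "$a\ll b$" means that for every $b>0$ there is $a_0>0$ such that the statement holds for all $0<a\le a_0$; longer hierarchies are read analogously. A $k$-complex is a hypergraph $J$ in which every edge has at most $k$ vertices and every subset of an edge is an edge; $J_i$ is the set of edges of size exactly $i$. Allocations: an allocation function is a map $f:[k]\to[r]$, with index vector $\mathbf{i}(f)=(|f^{-1}(1)|,\dots,|f^{-1}(r)|)$. Given a multiset $I$ of $k$-vectors in $\mathbb{Z}^r$ (nonnegative integer vectors with coordinate sum $k$), an allocation $F$ is the multiset obtained by choosing, for each $\mathbf{i}\in I$ (with repetition), some $f$ with $\mathbf{i}(f)=\mathbf{i}$ and including all $k!$ functions $f\circ\sigma$, $\sigma\in\mathrm{Sym}_k$ (with repetition). $J$ on $V=V_1\cup\dots\cup V_r$ is $\mathcal{P}F$-partite if for every $j\in[k]$ and $e\in J_j$ there is $f\in F$ with $e=\{v_1,\dots,v_j\}$ and $v_i\in V_{f(i)}$ for all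 $i\in[j]$. For $f\in F$ and $0\le j\le k-1$, $\delta^f_j(J)$ is the largest $m$ such that for every edge $\{v_1,\dots,v_j\}\in J$ with $v_i\in V_{f(i)}$ there are at least $m$ vertices $v_{j+1}\in V_{f(j+1)}$ with $\{v_1,\dots,v_{j+1}\}\in J$; $\delta^F_j(J)=\min_{f\in F}\delta^f_j(J)$, $\delta^F(J)=(\delta^F_0(J),\dots,\delta^F_{k-1}(J))$, compared coordinatewise. Reachability: for a $k$-graph $H$ on $N$ vertices, two vertices $u,w$ are $(\beta,i)$-reachable in $H$ if there are at least $\beta N^{ik-1}$ sets $S$ of size $ik-1$ such that both $H[S\cup\{u\}]$ and $H[S\cup\{w\}]$ have perfect matchings. With respect to the partition $\mathcal{P}$, $\tilde N_{\beta,i}(v,H)$ denotes the set of vertices in the same part of $\mathcal{P}$ as $v$ that are $(\beta,i)$-reachable to $v$ in $H$. Here $H=J_k$ and $N=rn$. *)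

theory Defs
  imports Complex_Main "HOL-Library.Multiset" "HOL-Library.FuncSet"
    "HOL-Library.Extended_Real" "HOL-Combinatorics.Permutations"
begin

(* An allocation is the multiset obtained by choosing
   (with repetition) a multiset G of allocation functions (one per index vector
   of the multiset I) and including, for each g in G, all k! functions g o sigma,
   sigma in Sym_k (with repetition). *)

definition sym_orbit :: "nat \<Rightarrow> (nat \<Rightarrow> nat) \<Rightarrow> (nat \<Rightarrow> nat) multiset" where
  "sym_orbit k g = image_mset (\<lambda>\<sigma>. g \<circ> \<sigma>) (mset_set {\<sigma>. \<sigma> permutes {1..k}})"

definition is_allocation :: "nat \<Rightarrow> nat \<Rightarrow> (nat \<Rightarrow> nat) multiset \<Rightarrow> bool" where
  "is_allocation k r F \<longleftrightarrow>
     (\<exists>G :: (nat \<Rightarrow> nat) multiset. set_mset G \<subseteq> ({1..k} \<rightarrow>\<^sub>E {1..r}) \<and>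
        F = sum_mset (image_mset (sym_orbit k) G))"

definition is_k_complex :: "nat \<Rightarrow> nat set \<Rightarrow> nat set set \<Rightarrow> bool" where
  "is_k_complex k V J \<longleftrightarrow>
     {} \<in> J \<and>
     (\<forall>e\<in>J. e \<subseteq> V \<and> finite e \<and> card e \<le> k) \<and>
     (\<forall>e\<in>J. \<forall>e'. e' \<subseteq> e \<longrightarrow> e' \<in> J)"

definition layer :: "nat set set \<Rightarrow> nat \<Rightarrow> nat set set" where
  "layer J i = {e \<in> J. card e = i}"

definition is_partition :: "nat \<Rightarrow> nat \<Rightarrow> nat set \<Rightarrow> (nat \<Rightarrow> nat set) \<Rightarrow> bool" where
  "is_partition r n V Vp \<longleftrightarrow>
     (\<forall>j\<in>{1..r}. card (Vp j) = n) \<and>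
     (\<forall>i\<in>{1..r}. \<forall>j\<in>{1..r}. i \<noteq> j \<longrightarrow> Vp i \<inter> Vp j = {}) \<and>
     V = (\<Union>j\<in>{1..r}. Vp j)"

definition f_shaped :: "(nat \<Rightarrow> nat set) \<Rightarrow> (nat \<Rightarrow> nat) \<Rightarrow> nat \<Rightarrow> nat set \<Rightarrow> bool" where
  "f_shaped Vp f j e \<longleftrightarrow> (\<exists>v :: nat \<Rightarrow> nat. e = v ` {1..j} \<and> (\<forall>i\<in>{1..j}. v i \<in> Vp (f i)))"

definition is_PF_partite :: "nat \<Rightarrow> (nat \<Rightarrow> nat set) \<Rightarrow> (nat \<Rightarrow> nat) multiset \<Rightarrow> nat set set \<Rightarrow> bool" where
  "is_PF_partite k Vp F J \<longleftrightarrow>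
     (\<forall>j\<in>{1..k}. \<forall>e\<in>layer J j. \<exists>f\<in>#F. f_shaped Vp f j e)"

(* delta^f_j(J): the largest m (possibly infinite if there are no such edges)
   such that every edge {v_1..v_j} of J with v_i in V_{f(i)} has at least m
   extensions by a new vertex v_{j+1} in V_{f(j+1)} *)
definition delta_f :: "(nat \<Rightarrow> nat set) \<Rightarrow> nat set set \<Rightarrow> (nat \<Rightarrow> nat) \<Rightarrow> nat \<Rightarrow> ereal" where
  "delta_f Vp J f j =
     (INF e \<in> {e \<in> J. card e = j \<and> f_shaped Vp f j e}.
        ereal (real (card {u \<in> Vp (f (Suc j)). u \<notin> e \<and> insert u e \<in> J})))"

definition delta_F :: "(nat \<Rightarrow> nat set) \<Rightarrow> nat set set \<Rightarrow> (nat \<Rightarrow> nat) multiset \<Rightarrow> nat \<Rightarrow> ereal" where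
  "delta_F Vp J F j = (INF f \<in> set_mset F. delta_f Vp J f j)"

definition induced :: "nat set set \<Rightarrow> nat set \<Rightarrow> nat set set" where
  "induced H X = {e \<in> H. e \<subseteq> X}"

definition has_perfect_matching :: "nat set set \<Rightarrow> nat set \<Rightarrow> bool" where
  "has_perfect_matching H X \<longleftrightarrow> (\<exists>M \<subseteq> H. pairwise disjnt M \<and> \<Union>M = X)"

definition reachable :: "nat \<Rightarrow> nat set \<Rightarrow> nat set set \<Rightarrow> real \<Rightarrow> nat \<Rightarrow> nat \<Rightarrow> nat \<Rightarrow> bool" where
  "reachable k V H \<beta> i u w \<longleftrightarrow>
     real (card {S. S \<subseteq> V \<and> card S = i * k - 1 \<and>
                 has_perfect_matching (induced H (insert u S)) (insert u S) \<and>
                 has_perfect_matching (induced H (insert w S)) (insert w S)})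
       \<ge> \<beta> * real (card V) ^ (i * k - 1)"

definition reach_nbhd :: "nat \<Rightarrow> nat \<Rightarrow> nat set \<Rightarrow> (nat \<Rightarrow> nat set) \<Rightarrow> nat set set \<Rightarrow> real \<Rightarrow> nat \<Rightarrow> nat \<Rightarrow> nat set" where
  "reach_nbhd k r V Vp H \<beta> i v =
     {w. (\<exists>j\<in>{1..r}. v \<in> Vp j \<and> w \<in> Vp j) \<and> reachable k V H \<beta> i v w}"

end

(* Fix v in Vp j and an allocation function f in F with f 1 = j.  Growing edges
   out of v one vertex at a time along f, the degree conditions give at least
   (zeta n / k)^(k-1) sets S of size k-1 with insert v S in J_k; composing f with
   the transposition of 1 and k, each such S is closed by at least delta_(k-1)
   vertices w of Vp j.  Double count the pairs (S, w): a single edge is a perfect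
   matching of itself, so a w that is not (eta,1)-reachable from v closes fewer
   than eta (r n)^(k-1) of the sets S, while a reachable w closes at most all of
   them.  Once eta <= (zeta / (r k))^(2(k-1)) this yields the bound for every
   n >= 1. *)

theory Submission
  imports Defs
begin

lemma sum_card_filter_swap:
  assumes "finite A" "finite W"
  shows "(\<Sum>S\<in>A. card {w \<in> W. P S w}) = (\<Sum>w\<in>W. card {S \<in> A. P S w})"
proof -
  have "(\<Sum>S\<in>A. card {w \<in> W. P S w}) = (\<Sum>S\<in>A. \<Sum>w\<in>W. of_bool (P S w))"
    using assms(2) by (simp add: Int_def)
  also have "\<dots> = (\<Sum>w\<in>W. \<Sum>S\<in>A. of_bool (P S w))" by (rule sum.swap)
  also have "\<dots> = (\<Sum>w\<in>W. card {S \<in> A. P S w})"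
    using assms(1) by (simp add: Int_def)
  finally show ?thesis .
qed

lemma double_counting_bound:
  fixes P :: "'a \<Rightarrow> 'b \<Rightarrow> bool" and d b :: real
  assumes "finite A" "finite W" "R \<subseteq> W" "b \<ge> 0"
    and many: "\<And>S. S \<in> A \<Longrightarrow> d \<le> card {w \<in> W. P S w}"
    and few: "\<And>w. w \<in> W - R \<Longrightarrow> card {S \<in> A. P S w} \<le> b"
  shows "card A * d \<le> card R * card A + card W * b"
proof -
  have "card A * d \<le> (\<Sum>S\<in>A. real (card {w \<in> W. P S w}))"
    using sum_mono[of A "\<lambda>_. d", OF many] by simp
  also have "\<dots> = (\<Sum>w\<in>W. real (card {S \<in> A. P S w}))"
    unfolding of_nat_sum[symmetric] sum_card_filter_swap[OF assms(1,2)] ..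
  also have "\<dots> = (\<Sum>w\<in>R. real (card {S \<in> A. P S w})) + (\<Sum>w\<in>W - R. real (card {S \<in> A. P S w}))"
    using sum.subset_diff[OF assms(3,2)] by (simp add: add.commute)
  also have "(\<Sum>w\<in>R. real (card {S \<in> A. P S w})) \<le> card R * card A"
    using sum_bounded_above[of R "\<lambda>w. real (card {S \<in> A. P S w})" "real (card A)"]
    by (simp add: assms(1) card_mono)
  also have "(\<Sum>w\<in>W - R. real (card {S \<in> A. P S w})) \<le> card (W - R) * b"
    using sum_bounded_above[of "W - R", OF few] by simp
  also have "\<dots> \<le> card W * b"
    using assms(2,4) by (intro mult_right_mono) (simp_all add: card_mono)
  finally show ?thesis by simp
qed

lemma sum_card_extensions_le:
  fixes A B :: "'a set set" and E :: "'a set \<Rightarrow> 'a set"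
  assumes "finite A" "finite B"
    and B: "\<And>T. T \<in> B \<Longrightarrow> finite T \<and> card T \<le> m"
    and E: "\<And>T u. T \<in> A \<Longrightarrow> u \<in> E T \<Longrightarrow> u \<notin> T \<and> insert u T \<in> B"
  shows "(\<Sum>T\<in>A. card (E T)) \<le> m * card B"
proof -
  have "E T \<subseteq> \<Union>B" if "T \<in> A" for T
    using E[OF that] by blast
  then have fin_E: "finite (E T)" if "T \<in> A" for T
    using that assms(2) B by (meson finite_Union finite_subset)
  have inj: "inj_on (\<lambda>(T, u). (insert u T, u)) (Sigma A E)"
    by (rule inj_onI) (auto dest!: E simp: insert_ident)
  have "(\<lambda>(T, u). (insert u T, u)) ` Sigma A E \<subseteq> Sigma B id"
    using E by auto
  moreover have "finite (Sigma B id)"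
    using assms(2) B by (simp add: finite_SigmaI)
  ultimately have "card (Sigma A E) \<le> card (Sigma B id)"
    by (rule card_inj_on_le[OF inj])
  also have "\<dots> = (\<Sum>T\<in>B. card T)"
    using assms(2) B by (simp add: card_SigmaI)
  also have "\<dots> \<le> m * card B"
    using sum_bounded_above[of B card m] B by (simp add: mult.commute)
  finally show ?thesis
    using assms(1) fin_E by (simp add: card_SigmaI)
qed

lemma mult_le_imp_le_add_sqrt:
  fixes a d \<rho> \<eta> n y :: real
  assumes main: "a * d \<le> \<rho> * a + n * (\<eta> * y)" and "sqrt \<eta> * y \<le> a"
    and "a > 0" "\<eta> \<ge> 0" "n \<ge> 0"
  shows "d \<le> \<rho> + sqrt \<eta> * n"
proof -
  have "\<eta> * y = sqrt \<eta> * (sqrt \<eta> * y)"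
    using assms(4) by (simp add: mult.assoc[symmetric])
  also have "\<dots> \<le> sqrt \<eta> * a"
    using assms by (intro mult_left_mono) simp_all
  finally have "n * (\<eta> * y) \<le> n * (sqrt \<eta> * a)"
    using assms(5) by (rule mult_left_mono)
  then have "a * d \<le> a * (\<rho> + sqrt \<eta> * n)"
    using main by (simp add: algebra_simps)
  then show ?thesis
    using assms(3) by simp
qed

lemma sqrt_mult_power_le:
  fixes \<eta> \<zeta> r k n :: real
  assumes "\<eta> \<le> ((\<zeta> / (r * k)) ^ q)\<^sup>2" "\<zeta> \<ge> 0" "r > 0" "k > 0" "n \<ge> 0"
  shows "sqrt \<eta> * (r * n) ^ q \<le> (\<zeta> * n / k) ^ q"
proof -
  have "sqrt \<eta> \<le> (\<zeta> / (r * k)) ^ q"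
    using real_sqrt_le_mono[OF assms(1)] assms(2-4) by simp
  then have "sqrt \<eta> * (r * n) ^ q \<le> (\<zeta> / (r * k)) ^ q * (r * n) ^ q"
    using assms(3,5) by (intro mult_right_mono) simp_all
  also have "\<dots> = (\<zeta> * n / k) ^ q"
    using assms(3) by (simp flip: power_mult_distrib)
  finally show ?thesis .
qed

lemma has_perfect_matching_induced_self:
  "X \<in> H \<Longrightarrow> has_perfect_matching (induced H X) X"
  unfolding has_perfect_matching_def induced_def
  by (intro exI[of _ "{X}"]) (auto simp: pairwise_def)

lemma card_common_links_lt_if_not_reachable:
  assumes "\<not> reachable k V H \<beta> 1 u w" "finite V"
  shows "real (card {S. S \<subseteq> V \<and> card S = k - 1 \<and> insert u S \<in> H \<and> insert w S \<in> H})
    < \<beta> * real (card V) ^ (k - 1)"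
proof -
  let ?RS = "{S. S \<subseteq> V \<and> card S = 1 * k - 1 \<and>
    has_perfect_matching (induced H (insert u S)) (insert u S) \<and>
    has_perfect_matching (induced H (insert w S)) (insert w S)}"
  have "{S. S \<subseteq> V \<and> card S = k - 1 \<and> insert u S \<in> H \<and> insert w S \<in> H} \<subseteq> ?RS"
    by (auto intro: has_perfect_matching_induced_self)
  moreover have "finite ?RS"
    using assms(2) by (auto intro: finite_subset[of _ "Pow V"])
  ultimately have "card {S. S \<subseteq> V \<and> card S = k - 1 \<and> insert u S \<in> H \<and> insert w S \<in> H} \<le> card ?RS"
    by (rule card_mono[rotated])
  then show ?thesis
    using assms(1) unfolding reachable_def by simp
qed

lemma transpose_image_atLeastAtMost:
  assumes "k \<ge> 1"
  shows "Transposition.transpose 1 (k::nat) ` {1..k-1} = {2..k}"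
proof -
  have "{1..k-1} = {1..k} - {k}" "{2..k} = {1..k} - {1}" using assms by auto
  then show ?thesis
    using assms by (simp add: image_set_diff)
qed

lemma allocation_comp_permutes:
  assumes "is_allocation k r F" "f \<in># F" "\<sigma> permutes {1..k}"
  shows "f \<circ> \<sigma> \<in># F"
proof -
  obtain G where F: "F = sum_mset (image_mset (sym_orbit k) G)"
    using assms(1) unfolding is_allocation_def by auto
  then obtain h where h: "h \<in># G" "f \<in># sym_orbit k h"
    using assms(2) by (auto simp: in_Union_mset_iff)
  have fin: "finite {\<sigma>. \<sigma> permutes {1..k}}"
    by (simp add: finite_permutations)
  from h(2) obtain \<tau> where \<tau>: "\<tau> permutes {1..k}" "f = h \<circ> \<tau>"
    unfolding sym_orbit_def using fin by auto
  have "\<tau> \<circ> \<sigma> permutes {1..k}"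
    using permutes_compose[OF assms(3) \<tau>(1)] .
  then have "f \<circ> \<sigma> \<in># sym_orbit k h"
    unfolding sym_orbit_def using fin \<tau>(2)
    by (auto simp: o_assoc intro!: image_eqI[where x="\<tau> \<circ> \<sigma>"])
  then show ?thesis
    using F h(1) by (auto simp: in_Union_mset_iff)
qed

lemma allocation_obtains_value_at:
  assumes "is_allocation k r F" "\<exists>f\<in>#F. f -` {j} \<inter> {1..k} \<noteq> {}" "p \<in> {1..k}"
  obtains f where "f \<in># F" "f p = j"
proof -
  obtain f i where f: "f \<in># F" "i \<in> {1..k}" "f i = j"
    using assms(2) by blast
  have "Transposition.transpose p i permutes {1..k}"
    using assms(3) f(2) by (rule permutes_swap_id)
  then have "f \<circ> Transposition.transpose p i \<in># F"
    by (rule allocation_comp_permutes[OF assms(1) f(1)])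
  then show ?thesis
    using that f(3) by simp
qed

lemma delta_F_le_card_extensions:
  assumes "f \<in># F" "e \<in> J" "card e = j" "f_shaped Vp f j e"
  shows "delta_F Vp J F j \<le> ereal (card {u \<in> Vp (f (Suc j)). u \<notin> e \<and> insert u e \<in> J})"
proof -
  have "delta_F Vp J F j \<le> delta_f Vp J f j"
    unfolding delta_F_def using assms(1) by (intro INF_lower) simp
  also have "\<dots> \<le> ereal (card {u \<in> Vp (f (Suc j)). u \<notin> e \<and> insert u e \<in> J})"
    unfolding delta_f_def using assms(2-4) by (intro INF_lower) simp
  finally show ?thesis .
qed

locale partite_complex =
  fixes k r n :: nat and V :: "nat set" and Vp :: "nat \<Rightarrow> nat set"
    and J :: "nat set set" and F :: "(nat \<Rightarrow> nat) multiset"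
  assumes k_pos: "k \<ge> 1" and n_pos: "n \<ge> 1"
    and allocation: "is_allocation k r F"
    and covers: "\<forall>j\<in>{1..r}. \<exists>f\<in>#F. f -` {j} \<inter> {1..k} \<noteq> {}"
    and partition: "is_partition r n V Vp"
    and complex: "is_k_complex k V J"
    and vertex_degree: "delta_F Vp J F 0 \<ge> ereal (real n)"
begin

lemma card_part: "j \<in> {1..r} \<Longrightarrow> card (Vp j) = n"
  using partition unfolding is_partition_def by auto

lemma finite_part: "j \<in> {1..r} \<Longrightarrow> finite (Vp j)"
  using card_part n_pos by (metis card.infinite not_one_le_zero)

lemma V_eq: "V = (\<Union>j\<in>{1..r}. Vp j)"
  using partition unfolding is_partition_def by auto

lemma finite_V: "finite V"
  using V_eq finite_part by auto

lemma card_V_le: "card V \<le> r * n"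
  using card_UN_le[of "{1..r}" Vp] card_part V_eq by simp

lemma edge_subset: "e \<in> J \<Longrightarrow> e \<subseteq> V"
  and finite_edge: "e \<in> J \<Longrightarrow> finite e"
  and edge_downward_closed: "e \<in> J \<Longrightarrow> e' \<subseteq> e \<Longrightarrow> e' \<in> J"
  and empty_edge: "{} \<in> J"
  using complex unfolding is_k_complex_def by auto

lemma obtain_value_at:
  assumes "j \<in> {1..r}" "p \<in> {1..k}"
  obtains f where "f \<in># F" "f p = j"
proof -
  have "\<exists>f\<in>#F. f -` {j} \<inter> {1..k} \<noteq> {}"
    using covers assms(1) by blast
  then show ?thesis
    using allocation_obtains_value_at[OF allocation _ assms(2)] that by metis
qed

lemma singleton_edge:
  assumes j: "j \<in> {1..r}" and v: "v \<in> Vp j"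
  shows "{v} \<in> J"
proof -
  obtain f where f: "f \<in># F" "f 1 = j"
    using obtain_value_at[OF j, of 1] k_pos by auto
  have "f_shaped Vp f 0 {}"
    unfolding f_shaped_def by simp
  then have "delta_F Vp J F 0 \<le> ereal (card {u \<in> Vp j. {u} \<in> J})"
    using delta_F_le_card_extensions[OF f(1) empty_edge] f(2) by simp
  with vertex_degree have "ereal n \<le> ereal (card {u \<in> Vp j. {u} \<in> J})"
    by (rule order_trans)
  then have "card (Vp j) \<le> card {u \<in> Vp j. {u} \<in> J}"
    using card_part[OF j] by simp
  then have "{u \<in> Vp j. {u} \<in> J} = Vp j"
    using finite_part[OF j] by (intro card_seteq) auto
  then show ?thesis
    using v by blast
qed

definition shaped_link :: "(nat \<Rightarrow> nat) \<Rightarrow> nat \<Rightarrow> nat \<Rightarrow> nat set set" where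
  "shaped_link f v m = {T. card T = m \<and> v \<notin> T \<and> insert v T \<in> J \<and>
     (\<exists>w. T = w ` {2..m+1} \<and> (\<forall>i\<in>{2..m+1}. w i \<in> Vp (f i)))}"

lemma shaped_link_0:
  "j \<in> {1..r} \<Longrightarrow> v \<in> Vp j \<Longrightarrow> shaped_link f v 0 = {{}}"
  unfolding shaped_link_def using singleton_edge by auto

lemma finite_shaped_link: "finite (shaped_link f v m)"
proof -
  have "shaped_link f v m \<subseteq> Pow V"
    unfolding shaped_link_def using edge_subset by blast
  then show ?thesis
    using finite_V by (meson finite_Pow_iff finite_subset)
qed

lemma shaped_link_card:
  assumes "T \<in> shaped_link f v m"
  shows "finite T \<and> card T = m"
proof -
  have "insert v T \<in> J" "card T = m"
    using assms unfolding shaped_link_def by auto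
  then show ?thesis
    using finite_edge[of "insert v T"] by simp
qed

lemma f_shaped_insert_root:
  assumes T: "T \<in> shaped_link f v m" and v: "v \<in> Vp (f 1)"
  shows "f_shaped Vp f (m+1) (insert v T)"
proof -
  obtain w where w: "T = w ` {2..m+1}" "\<forall>i\<in>{2..m+1}. w i \<in> Vp (f i)"
    using T unfolding shaped_link_def by auto
  have "{1..m+1} = insert 1 {2..m+1}"
    by auto
  then have "insert v T = (w(1 := v)) ` {1..m+1}"
    using w(1) by auto
  then show ?thesis
    unfolding f_shaped_def using w(2) v by (intro exI[of _ "w(1 := v)"]) auto
qed

lemma insert_shaped_link:
  assumes T: "T \<in> shaped_link f v m"
    and u: "u \<in> Vp (f (m+2))" "u \<notin> insert v T" "insert u (insert v T) \<in> J"
  shows "insert u T \<in> shaped_link f v (m+1)"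
proof -
  obtain w where w: "T = w ` {2..m+1}" "\<forall>i\<in>{2..m+1}. w i \<in> Vp (f i)"
    using T unfolding shaped_link_def by auto
  have "{2..m+2} = insert (m+2) {2..m+1}"
    by auto
  then have "\<exists>w'. insert u T = w' ` {2..m+1+1} \<and> (\<forall>i\<in>{2..m+1+1}. w' i \<in> Vp (f i))"
    using w u(1) by (intro exI[of _ "w(m+2 := u)"]) auto
  moreover have "card (insert u T) = m+1" "insert v (insert u T) \<in> J"
    using shaped_link_card[OF T] u by (auto simp: insert_commute)
  moreover have "v \<notin> insert u T"
    using T u(2) unfolding shaped_link_def by auto
  ultimately show ?thesis
    unfolding shaped_link_def by blast
qed

lemma card_shaped_link_Suc:
  fixes d :: real
  assumes f: "f \<in># F" "v \<in> Vp (f 1)" and d: "ereal d \<le> delta_F Vp J F (m+1)"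
  shows "card (shaped_link f v m) * d \<le> (m+1) * card (shaped_link f v (m+1))"
proof -
  let ?E = "\<lambda>T. {u \<in> Vp (f (m+2)). u \<notin> insert v T \<and> insert u (insert v T) \<in> J}"
  have "d \<le> card (?E T)" if T: "T \<in> shaped_link f v m" for T
  proof -
    have "insert v T \<in> J" "card (insert v T) = m+1"
      using T shaped_link_card[OF T] unfolding shaped_link_def by auto
    then have "delta_F Vp J F (m+1) \<le> ereal (card (?E T))"
      using delta_F_le_card_extensions[OF f(1) _ _ f_shaped_insert_root[OF T f(2)]] by simp
    with d have "ereal d \<le> ereal (card (?E T))"
      by (rule order_trans)
    then show ?thesis
      by simp
  qed
  then have "card (shaped_link f v m) * d \<le> (\<Sum>T\<in>shaped_link f v m. card (?E T))"
    using sum_mono[of "shaped_link f v m" "\<lambda>_. d"] by simp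
  also have "(\<Sum>T\<in>shaped_link f v m. card (?E T)) \<le> (m+1) * card (shaped_link f v (m+1))"
    using shaped_link_card insert_shaped_link
    by (intro sum_card_extensions_le finite_shaped_link) auto
  finally show ?thesis
    by (simp only: of_nat_mult[symmetric] of_nat_le_iff)
qed

lemma card_shaped_link_ge:
  fixes \<zeta> :: real
  assumes f: "f \<in># F" "f 1 = j" and v: "j \<in> {1..r}" "v \<in> Vp j" and "\<zeta> \<ge> 0"
    and degrees: "\<forall>i\<in>{1..k-1}. delta_F Vp J F i \<ge> ereal (\<zeta> * n)"
    and "m \<le> k - 1"
  shows "(\<zeta> * n / k) ^ m \<le> card (shaped_link f v m)"
  using \<open>m \<le> k - 1\<close>
proof (induction m)
  case 0
  then show ?case
    using shaped_link_0[OF v] by simp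
next
  case (Suc m)
  have "card (shaped_link f v m) * (\<zeta> * n) \<le> (m+1) * card (shaped_link f v (m+1))"
    using Suc.prems degrees f(2) v(2) by (intro card_shaped_link_Suc[OF f(1)]) auto
  also have "\<dots> \<le> k * card (shaped_link f v (m+1))"
    using Suc.prems by (simp only: of_nat_le_iff) (intro mult_right_mono, auto)
  finally have "card (shaped_link f v m) * (\<zeta> * n / k) \<le> card (shaped_link f v (Suc m))"
    using k_pos by (simp add: divide_le_eq mult.commute)
  moreover have "(\<zeta> * n / k) ^ Suc m \<le> card (shaped_link f v m) * (\<zeta> * n / k)"
    unfolding power_Suc2 using Suc \<open>\<zeta> \<ge> 0\<close> by (intro mult_right_mono) auto
  ultimately show ?case
    by linarith
qed

lemma f_shaped_transpose_shaped_link: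
  assumes "S \<in> shaped_link f v (k-1)"
  shows "f_shaped Vp (f \<circ> Transposition.transpose 1 k) (k-1) S"
proof -
  obtain w where w: "S = w ` {2..k}" "\<forall>i\<in>{2..k}. w i \<in> Vp (f i)"
    using assms k_pos unfolding shaped_link_def by auto
  have "S = (w \<circ> Transposition.transpose 1 k) ` {1..k-1}"
    by (simp only: image_comp[symmetric] transpose_image_atLeastAtMost[OF k_pos] w(1))
  moreover have "\<forall>i\<in>{1..k-1}. (w \<circ> Transposition.transpose 1 k) i \<in> Vp ((f \<circ> Transposition.transpose 1 k) i)"
    using w(2) transpose_image_atLeastAtMost[OF k_pos] by auto
  ultimately show ?thesis
    unfolding f_shaped_def by blast
qed

lemma delta_F_le_card_closing_vertices:
  assumes f: "f \<in># F" and S: "S \<in> shaped_link f v (k-1)"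
  shows "delta_F Vp J F (k-1) \<le> ereal (card {w \<in> Vp (f 1). w \<notin> S \<and> insert w S \<in> J})"
proof -
  let ?g = "f \<circ> Transposition.transpose 1 k"
  have "Transposition.transpose 1 k permutes {1..k}"
    using k_pos by (intro permutes_swap_id) auto
  then have "?g \<in># F"
    by (rule allocation_comp_permutes[OF allocation f])
  moreover have "S \<in> J"
    using S edge_downward_closed unfolding shaped_link_def by blast
  moreover have "?g (Suc (k-1)) = f 1"
    using k_pos by simp
  ultimately show ?thesis
    using delta_F_le_card_extensions[OF _ _ _ f_shaped_transpose_shaped_link[OF S]] shaped_link_card[OF S]
    by simp
qed

lemma card_closing_links_le_if_not_reachable:
  fixes \<eta> :: real
  assumes "j \<in> {1..r}" "v \<in> Vp j" "w \<in> Vp j"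
    and "w \<notin> reach_nbhd k r V Vp (layer J k) \<eta> 1 v" and "\<eta> \<ge> 0"
  shows "card {S \<in> shaped_link f v (k-1). w \<notin> S \<and> insert w S \<in> J} \<le> \<eta> * (real r * real n) ^ (k-1)"
proof -
  let ?C = "{S. S \<subseteq> V \<and> card S = k - 1 \<and> insert v S \<in> layer J k \<and> insert w S \<in> layer J k}"
  have "\<not> reachable k V (layer J k) \<eta> 1 v w"
    using assms unfolding reach_nbhd_def by auto
  then have "card ?C < \<eta> * real (card V) ^ (k-1)"
    using finite_V by (rule card_common_links_lt_if_not_reachable)
  also have "\<dots> \<le> \<eta> * (real r * real n) ^ (k-1)"
    using card_V_le \<open>\<eta> \<ge> 0\<close> by (intro mult_left_mono) (simp_all add: power_mono flip: of_nat_mult of_nat_power)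
  finally have "card ?C \<le> \<eta> * (real r * real n) ^ (k-1)"
    by simp
  moreover have "S \<in> ?C" if S: "S \<in> shaped_link f v (k-1)" "w \<notin> S" "insert w S \<in> J" for S
  proof -
    have "v \<notin> S" "insert v S \<in> J"
      using S(1) unfolding shaped_link_def by auto
    then show ?thesis
      using S shaped_link_card[OF S(1)] k_pos edge_subset[of "insert v S"] unfolding layer_def by auto
  qed
  then have "{S \<in> shaped_link f v (k-1). w \<notin> S \<and> insert w S \<in> J} \<subseteq> ?C"
    by blast
  moreover have "finite ?C"
    using finite_V by (auto intro: finite_subset[of _ "Pow V"])
  ultimately show ?thesis
    by (meson card_mono of_nat_le_iff order_trans)
qed

lemma le_card_reach_nbhd_add_sqrt:
  fixes \<zeta> \<eta> d :: real
  assumes "\<zeta> > 0" "\<eta> > 0" and \<eta>_le: "\<eta> \<le> ((\<zeta> / (real r * real k)) ^ (k-1))\<^sup>2"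
    and degrees: "\<forall>i\<in>{1..k-1}. delta_F Vp J F i \<ge> ereal (\<zeta> * n)"
    and j: "j \<in> {1..r}" "v \<in> Vp j"
    and d: "ereal d \<le> delta_F Vp J F (k-1)"
  shows "d \<le> card (reach_nbhd k r V Vp (layer J k) \<eta> 1 v \<inter> Vp j) + sqrt \<eta> * n"
proof -
  obtain f where f: "f \<in># F" "f 1 = j"
    using obtain_value_at[OF j(1), of 1] k_pos by auto
  define A where "A = shaped_link f v (k-1)"
  define R where "R = reach_nbhd k r V Vp (layer J k) \<eta> 1 v \<inter> Vp j"
  have "sqrt \<eta> * (real r * real n) ^ (k-1) \<le> (\<zeta> * n / k) ^ (k-1)"
    using \<eta>_le \<open>\<zeta> > 0\<close> j(1) k_pos by (intro sqrt_mult_power_le) auto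
  also have "\<dots> \<le> card A"
    unfolding A_def using f j degrees \<open>\<zeta> > 0\<close> by (intro card_shaped_link_ge) auto
  finally have card_A: "sqrt \<eta> * (real r * real n) ^ (k-1) \<le> card A" .
  moreover have "sqrt \<eta> * (real r * real n) ^ (k-1) > 0"
    using \<open>\<eta> > 0\<close> j(1) n_pos by simp
  ultimately have "card A > 0"
    by linarith
  have "card A * d \<le> card R * card A + card (Vp j) * (\<eta> * (real r * real n) ^ (k-1))"
  proof (rule double_counting_bound[where P = "\<lambda>S w. w \<notin> S \<and> insert w S \<in> J"])
    show "d \<le> card {w \<in> Vp j. w \<notin> S \<and> insert w S \<in> J}" if "S \<in> A" for S
    proof -
      have "delta_F Vp J F (k-1) \<le> ereal (card {w \<in> Vp j. w \<notin> S \<and> insert w S \<in> J})"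
        using delta_F_le_card_closing_vertices[OF f(1)] that f(2) unfolding A_def by simp
      with d have "ereal d \<le> ereal (card {w \<in> Vp j. w \<notin> S \<and> insert w S \<in> J})"
        by (rule order_trans)
      then show ?thesis
        by simp
    qed
    show "card {S \<in> A. w \<notin> S \<and> insert w S \<in> J} \<le> \<eta> * (real r * real n) ^ (k-1)"
      if "w \<in> Vp j - R" for w
      using that j \<open>\<eta> > 0\<close> unfolding A_def R_def
      by (intro card_closing_links_le_if_not_reachable) auto
  qed (use finite_part[OF j(1)] \<open>\<eta> > 0\<close> R_def A_def finite_shaped_link in auto)
  then show ?thesis
    using card_A \<open>card A > 0\<close> \<open>\<eta> > 0\<close> card_part[OF j(1)] unfolding R_def
    by (intro mult_le_imp_le_add_sqrt[where a = "card A" and y = "(real r * real n) ^ (k-1)"]) auto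
qed

lemma card_reach_nbhd_ge:
  fixes \<zeta> \<eta> :: real
  assumes "\<zeta> > 0" "\<eta> > 0" "\<eta> \<le> ((\<zeta> / (real r * real k)) ^ (k-1))\<^sup>2"
    and "\<forall>i\<in>{1..k-1}. delta_F Vp J F i \<ge> ereal (\<zeta> * n)"
    and "j \<in> {1..r}" "v \<in> Vp j"
  shows "delta_F Vp J F (k-1) - ereal (sqrt \<eta> * n)
    \<le> ereal (card (reach_nbhd k r V Vp (layer J k) \<eta> 1 v \<inter> Vp j))"
proof (cases "delta_F Vp J F (k-1)")
  case (real d)
  then show ?thesis
    using le_card_reach_nbhd_add_sqrt[OF assms, of d] by simp
next
  case PInf
  let ?c = "card (reach_nbhd k r V Vp (layer J k) \<eta> 1 v \<inter> Vp j) + sqrt \<eta> * n"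
  show ?thesis
    using le_card_reach_nbhd_add_sqrt[OF assms, of "?c + 1"] PInf by simp
qed simp

end

theorem proposition4p1:
  "\<forall>\<zeta>::real. \<forall>r::nat. \<forall>k::nat. \<zeta> > 0 \<and> r \<ge> 1 \<and> k \<ge> 1 \<longrightarrow>
    (\<exists>\<eta>0::real. \<eta>0 > 0 \<and>
      (\<forall>\<eta>::real. 0 < \<eta> \<and> \<eta> \<le> \<eta>0 \<longrightarrow>
        (\<exists>n0::nat. \<forall>n::nat. n \<ge> n0 \<longrightarrow>
          (\<forall>(F :: (nat \<Rightarrow> nat) multiset) (V :: nat set) (Vp :: nat \<Rightarrow> nat set) (J :: nat set set).
             is_allocation k r F \<and>
             (\<forall>j\<in>{1..r}. \<exists>f\<in>#F. f -` {j} \<inter> {1..k} \<noteq> {}) \<and>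
             is_partition r n V Vp \<and>
             is_k_complex k V J \<and>
             is_PF_partite k Vp F J \<and>
             delta_F Vp J F 0 \<ge> ereal (real n) \<and>
             (\<forall>j\<in>{1..k-1}. delta_F Vp J F j \<ge> ereal (\<zeta> * real n))
           \<longrightarrow>
             (\<forall>j\<in>{1..r}. \<forall>v\<in>Vp j.
                ereal (real (card (reach_nbhd k r V Vp (layer J k) \<eta> 1 v \<inter> Vp j)))
                  \<ge> delta_F Vp J F (k - 1) - ereal (sqrt \<eta> * real n))))))"
proof (intro allI impI exI[of _ "1::nat"] exI conjI ballI)
  (* this show instantiates the threshold eta0 left schematic by exI *)
  show "((\<zeta> / (real r * real k)) ^ (k - 1))\<^sup>2 > 0" if "\<zeta> > 0 \<and> r \<ge> 1 \<and> k \<ge> 1"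
    for \<zeta> :: real and r k :: nat
    using that by simp
  show "delta_F Vp J F (k - 1) - ereal (sqrt \<eta> * real n)
      \<le> ereal (card (reach_nbhd k r V Vp (layer J k) \<eta> 1 v \<inter> Vp j))"
    if "\<zeta> > 0 \<and> r \<ge> 1 \<and> k \<ge> 1" "0 < \<eta> \<and> \<eta> \<le> ((\<zeta> / (real r * real k)) ^ (k - 1))\<^sup>2"
      "1 \<le> n" "is_allocation k r F \<and>
        (\<forall>j\<in>{1..r}. \<exists>f\<in>#F. f -` {j} \<inter> {1..k} \<noteq> {}) \<and> is_partition r n V Vp \<and>
        is_k_complex k V J \<and> is_PF_partite k Vp F J \<and> delta_F Vp J F 0 \<ge> ereal (real n) \<and>
        (\<forall>j\<in>{1..k-1}. delta_F Vp J F j \<ge> ereal (\<zeta> * real n))"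
      and "j \<in> {1..r}" "v \<in> Vp j"
    for \<zeta> \<eta> :: real and r k n F V Vp J j v
  proof -
    interpret partite_complex k r n V Vp J F
      using that by unfold_locales auto
    show ?thesis
      using card_reach_nbhd_ge that by auto
  qed
qed

end
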